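(* Let $H$ be a commutative monoid with identity $1_H$ and group of units $H^\times$. The following are equivalent: (a) $\mathcal{P}_{\mathrm{fin},1}(H)$ is UmF; (b) $H\setminus H^\times$ is a breakable subsemigroup of $H$, the group of units $H^\times$ has order $\le 2$, and $H$ is the trivial ideal extension of $H\setminus H^\times$ by $H^\times$.
   Context: For a monoid $H$, $\mathcal{P}_{\mathrm{fin},1}(H)$ denotes the set of all non-empty finite subsets of $H$ containing $1_H$; it is a monoid under setwise multiplication $XY=\{xy: x\in X, y\in Y\}$. Divisibility in a monoid $M$: $x\mid_M y$ iff $y\in MxM=\{uxv: u,v\in M\}$; $x,y$ are associated if each divides the other; $x$ properly divides $y$ if $x\mid_M y$ but $y\nmid_M x$. A unit-divisor is an element dividing $1_M$; otherwise it is a non-unit-divisor. An irreducible of $M$ is a non-unit-divisor $a$ such that $a\neq xy$ for all non-unit-divisors $x,y$ that both properly divide $a$. A factorization of $x\in M$ is a finite word $a_1\ast\cdots\ast a_n$ (possibly empty) over the set of irreducibles of $M$ with $a_1\cdots a_n=x$. For words $\mathfrak a,\mathfrak b$ over $M$, write $\mathfrak a\sqsubseteq\mathfrak b$ if $\mathfrak a$ is, up to replacing letters by associated elements, a subword (subsequence) of some permutation of $\mathfrak b$; $\mathfrak a,\mathfrak b$ are equivalent if $\mathfrak a\sqsubseteq\mathfrak b\sqsubseteq\mathfrak a$. A factorization $\mathfrak a$ of $x$ is minimal if there is no factorization $\mathfrak b$ of $x$ with $\mathfrak b\sqsubseteq\mathfrak a$ and $\mathfrak a\not\sqsubseteq\mathfrak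 b$. $M$ is UmF if every non-unit-divisor is a product of irreducibles and any two minimal factorizations of the same element are equivalent. A semigroup $S$ is breakable if $xy\in\{x,y\}$ for all $x,y\in S$. "$H$ is the trivial ideal extension of $H\setminus H^\times$ by $H^\times$" means $uy=yu=y$ for all $u\in H^\times$ and $y\in H\setminus H^\times$ (the operation on $H^\times\cup(H\setminus H^\times)$ extends those of the two disjoint semigroups by this rule). *)

theory Defs
  imports Main "HOL-Library.Sublist" "HOL-Library.Multiset"
begin

definition mdvd :: "'m set \<Rightarrow> ('m \<Rightarrow> 'm \<Rightarrow> 'm) \<Rightarrow> 'm \<Rightarrow> 'm \<Rightarrow> bool" where
  "mdvd M f x y \<longleftrightarrow> (\<exists>u\<in>M. \<exists>v\<in>M. y = f (f u x) v)"

definition massoc :: "'m set \<Rightarrow> ('m \<Rightarrow> 'm \<Rightarrow> 'm) \<Rightarrow> 'm \<Rightarrow> 'm \<Rightarrow> bool" where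
  "massoc M f x y \<longleftrightarrow> mdvd M f x y \<and> mdvd M f y x"

definition mproper_dvd :: "'m set \<Rightarrow> ('m \<Rightarrow> 'm \<Rightarrow> 'm) \<Rightarrow> 'm \<Rightarrow> 'm \<Rightarrow> bool" where
  "mproper_dvd M f x y \<longleftrightarrow> mdvd M f x y \<and> \<not> mdvd M f y x"

definition unit_divisor :: "'m set \<Rightarrow> ('m \<Rightarrow> 'm \<Rightarrow> 'm) \<Rightarrow> 'm \<Rightarrow> 'm \<Rightarrow> bool" where
  "unit_divisor M f e x \<longleftrightarrow> x \<in> M \<and> mdvd M f x e"

definition non_unit_divisor :: "'m set \<Rightarrow> ('m \<Rightarrow> 'm \<Rightarrow> 'm) \<Rightarrow> 'm \<Rightarrow> 'm \<Rightarrow> bool" where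
  "non_unit_divisor M f e x \<longleftrightarrow> x \<in> M \<and> \<not> mdvd M f x e"

definition mirreducible :: "'m set \<Rightarrow> ('m \<Rightarrow> 'm \<Rightarrow> 'm) \<Rightarrow> 'm \<Rightarrow> 'm \<Rightarrow> bool" where
  "mirreducible M f e a \<longleftrightarrow> non_unit_divisor M f e a \<and>
     (\<forall>x y. non_unit_divisor M f e x \<and> non_unit_divisor M f e y \<and>
            mproper_dvd M f x a \<and> mproper_dvd M f y a \<longrightarrow> a \<noteq> f x y)"

definition word_prod :: "('m \<Rightarrow> 'm \<Rightarrow> 'm) \<Rightarrow> 'm \<Rightarrow> 'm list \<Rightarrow> 'm" where
  "word_prod f e as = foldr f as e"

definition factorization :: "'m set \<Rightarrow> ('m \<Rightarrow> 'm \<Rightarrow> 'm) \<Rightarrow> 'm \<Rightarrow> 'm \<Rightarrow> 'm list \<Rightarrow> bool" where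
  "factorization M f e x as \<longleftrightarrow> (\<forall>a\<in>set as. mirreducible M f e a) \<and> word_prod f e as = x"

definition word_le :: "'m set \<Rightarrow> ('m \<Rightarrow> 'm \<Rightarrow> 'm) \<Rightarrow> 'm list \<Rightarrow> 'm list \<Rightarrow> bool" where
  "word_le M f as bs \<longleftrightarrow> (\<exists>as' bs'. list_all2 (massoc M f) as as' \<and>
       mset bs' = mset bs \<and> subseq as' bs')"

definition word_equiv :: "'m set \<Rightarrow> ('m \<Rightarrow> 'm \<Rightarrow> 'm) \<Rightarrow> 'm list \<Rightarrow> 'm list \<Rightarrow> bool" where
  "word_equiv M f as bs \<longleftrightarrow> word_le M f as bs \<and> word_le M f bs as"

definition minimal_factorization :: "'m set \<Rightarrow> ('m \<Rightarrow> 'm \<Rightarrow> 'm) \<Rightarrow> 'm \<Rightarrow> 'm \<Rightarrow> 'm list \<Rightarrow> bool" where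
  "minimal_factorization M f e x as \<longleftrightarrow> factorization M f e x as \<and>
     \<not> (\<exists>bs. factorization M f e x bs \<and> word_le M f bs as \<and> \<not> word_le M f as bs)"

definition UmF :: "'m set \<Rightarrow> ('m \<Rightarrow> 'm \<Rightarrow> 'm) \<Rightarrow> 'm \<Rightarrow> bool" where
  "UmF M f e \<longleftrightarrow>
     (\<forall>x. non_unit_divisor M f e x \<longrightarrow> (\<exists>as. factorization M f e x as)) \<and>
     (\<forall>x as bs. minimal_factorization M f e x as \<and> minimal_factorization M f e x bs
        \<longrightarrow> word_equiv M f as bs)"

definition Pfin1 :: "'a::monoid_mult set set" where
  "Pfin1 = {X. finite X \<and> X \<noteq> {} \<and> 1 \<in> X}"

definition set_mult :: "'a::monoid_mult set \<Rightarrow> 'a set \<Rightarrow> 'a set" where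
  "set_mult X Y = {x * y | x y. x \<in> X \<and> y \<in> Y}"

definition units_of_monoid :: "'a::comm_monoid_mult set" where
  "units_of_monoid = {u. \<exists>v. u * v = 1}"

definition breakable :: "'a::times set \<Rightarrow> bool" where
  "breakable S \<longleftrightarrow> (\<forall>x\<in>S. \<forall>y\<in>S. x * y \<in> {x, y})"

end

theory Submission
  imports Defs
begin

text \<open>Both conditions are equivalent to \<open>x * y \<in> {1, x, y}\<close> for all \<open>x, y\<close>.
  In \<open>Pfin1\<close> divisibility implies inclusion, so associated elements are equal and \<open>\<sqsubseteq>\<close> is
  multiset inclusion; hence, under UmF, every letter of a minimal factorization of a set occurs
  in every factorization of that set. If the condition fails, this is violated by
  \<open>{1, a, a\<^sup>2, a\<^sup>3} = {1, a}{1, a\<^sup>2}\<close>, by \<open>{1, a, b, ab} = {1, a}{1, ab}\<close> when \<open>a\<^sup>2 = 1\<close>, or by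
  \<open>{1, a, b, ab} = {1, a, b}{1, ab}\<close> when \<open>a\<close> and \<open>b\<close> are idempotent, compared with the
  factorizations into the sets \<open>{1, a}\<close> and \<open>{1, b}\<close>. If it holds, then \<open>XY = X \<union> Y\<close>,
  the irreducibles are the sets \<open>{1, a}\<close> with \<open>a \<noteq> 1\<close>, and the minimal factorizations of \<open>X\<close>
  are the repetition-free words in the \<open>{1, a}\<close> with \<open>a \<in> X - {1}\<close>.\<close>

lemma mset_subset_eq_if_subseq: "subseq xs ys \<Longrightarrow> mset xs \<subseteq># mset ys"
  by (induction rule: list_emb.induct) (auto intro: subset_mset.order_trans)

lemma one_mem_Pfin1: "{1} \<in> Pfin1"
  by (simp add: Pfin1_def)

lemma set_mult_empty_left [simp]: "set_mult {} Y = {}"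
  by (simp add: set_mult_def)

lemma set_mult_insert_left [simp]:
  "set_mult (insert x X) Y = (\<lambda>y. x * y) ` Y \<union> set_mult X Y"
  by (auto simp: set_mult_def)

lemma set_mult_one_right [simp]: "set_mult X {1} = (X :: 'a::monoid_mult set)"
  by (auto simp: set_mult_def)

lemma mdvd_Pfin1_imp_subset:
  fixes X Y :: "'a::monoid_mult set"
  assumes "mdvd Pfin1 set_mult X Y"
  shows "X \<subseteq> Y"
proof
  fix x assume "x \<in> X"
  obtain U V where "U \<in> Pfin1" "V \<in> Pfin1" "Y = set_mult (set_mult U X) V"
    using assms unfolding mdvd_def by blast
  then have "1 * x * 1 \<in> Y"
    using \<open>x \<in> X\<close> unfolding Pfin1_def set_mult_def by blast
  then show "x \<in> Y"
    by simp
qed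

lemma mdvd_Pfin1_if_set_mult_eq:
  fixes X Y :: "'a::monoid_mult set"
  assumes "Y \<in> Pfin1" "set_mult X Y = Y"
  shows "mdvd Pfin1 set_mult X Y"
  unfolding mdvd_def using assms one_mem_Pfin1 by (intro bexI[of _ "{1}"] bexI[of _ Y]) simp_all

lemma mdvd_Pfin1_refl: "mdvd Pfin1 set_mult X (X :: 'a::monoid_mult set)"
  unfolding mdvd_def using one_mem_Pfin1 by (intro bexI[of _ "{1}"]) simp_all

lemma massoc_Pfin1_iff: "massoc Pfin1 set_mult X Y \<longleftrightarrow> X = (Y :: 'a::monoid_mult set)"
  using mdvd_Pfin1_imp_subset mdvd_Pfin1_refl unfolding massoc_def by blast

lemma non_unit_divisor_Pfin1_iff:
  "non_unit_divisor Pfin1 set_mult {1} X \<longleftrightarrow> X \<in> Pfin1 \<and> X \<noteq> {1 :: 'a::monoid_mult}"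
proof -
  have "\<not> mdvd Pfin1 set_mult X {1}" if "X \<in> Pfin1" "X \<noteq> {1}"
    using that mdvd_Pfin1_imp_subset unfolding Pfin1_def by blast
  then show ?thesis
    unfolding non_unit_divisor_def using mdvd_Pfin1_refl by blast
qed

lemma mproper_dvd_Pfin1_imp_psubset:
  "mproper_dvd Pfin1 set_mult X Y \<Longrightarrow> X \<subset> (Y :: 'a::monoid_mult set)"
  unfolding mproper_dvd_def using mdvd_Pfin1_imp_subset mdvd_Pfin1_refl by blast

lemma word_le_Pfin1_iff:
  "word_le Pfin1 set_mult as bs \<longleftrightarrow> mset as \<subseteq># mset (bs :: 'a::monoid_mult set list)"
proof -
  have massoc_eq: "massoc Pfin1 set_mult = ((=) :: 'a set \<Rightarrow> _)"
    by (intro ext) (simp add: massoc_Pfin1_iff)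
  have "word_le Pfin1 set_mult as bs \<longleftrightarrow> (\<exists>bs'. mset bs' = mset bs \<and> subseq as bs')"
    unfolding word_le_def massoc_eq list.rel_eq by blast
  also have "\<dots> \<longleftrightarrow> mset as \<subseteq># mset bs"
  proof
    assume "\<exists>bs'. mset bs' = mset bs \<and> subseq as bs'"
    then show "mset as \<subseteq># mset bs"
      by (metis mset_subset_eq_if_subseq)
  next
    assume "mset as \<subseteq># mset bs"
    obtain cs where "mset cs = mset bs - mset as"
      using ex_mset by blast
    then have "mset (as @ cs) = mset bs"
      using \<open>mset as \<subseteq># mset bs\<close> by simp
    moreover have "subseq as (as @ cs)"
      by (simp add: subseq_rev_drop_many)
    ultimately show "\<exists>bs'. mset bs' = mset bs \<and> subseq as bs'"
      by blast
  qed
  finally show ?thesis .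
qed

lemma mirreducible_Pfin1I:
  fixes A :: "'a::monoid_mult set"
  assumes "A \<in> Pfin1" "A \<noteq> {1}"
    and "\<And>X Y. X \<in> Pfin1 \<Longrightarrow> Y \<in> Pfin1 \<Longrightarrow> X \<noteq> {1} \<Longrightarrow> Y \<noteq> {1} \<Longrightarrow>
           X \<subset> A \<Longrightarrow> Y \<subset> A \<Longrightarrow> A \<noteq> set_mult X Y"
  shows "mirreducible Pfin1 set_mult {1} A"
  using assms unfolding mirreducible_def non_unit_divisor_Pfin1_iff
  by (blast dest: mproper_dvd_Pfin1_imp_psubset)

lemma mirreducible_Pfin1_neq_set_mult:
  fixes A X Y :: "'a::monoid_mult set"
  assumes "mirreducible Pfin1 set_mult {1} A"
    and "X \<in> Pfin1" "Y \<in> Pfin1" "X \<noteq> {1}" "Y \<noteq> {1}"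
    and "set_mult X A = A" "set_mult Y A = A" "\<not> A \<subseteq> X" "\<not> A \<subseteq> Y"
  shows "A \<noteq> set_mult X Y"
proof -
  have "A \<in> Pfin1"
    using assms(1) unfolding mirreducible_def non_unit_divisor_Pfin1_iff by blast
  then have "mproper_dvd Pfin1 set_mult X A" "mproper_dvd Pfin1 set_mult Y A"
    using assms(6-9) mdvd_Pfin1_if_set_mult_eq mdvd_Pfin1_imp_subset
    unfolding mproper_dvd_def by blast+
  then show ?thesis
    using assms(1-5) unfolding mirreducible_def non_unit_divisor_Pfin1_iff by blast
qed

lemma mirreducible_Pfin1_pair:
  fixes a :: "'a::monoid_mult"
  assumes "a \<noteq> 1"
  shows "mirreducible Pfin1 set_mult {1} {1, a}"
  using assms by (intro mirreducible_Pfin1I) (auto simp: Pfin1_def)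

lemma mirreducible_Pfin1_idempotent_triple:
  fixes a b :: "'a::comm_monoid_mult"
  assumes "a * a = a" "b * b = b" "a * b \<notin> {1, a, b}"
  shows "mirreducible Pfin1 set_mult {1} {1, a, b}"
proof (intro mirreducible_Pfin1I)
  show "{1, a, b} \<in> Pfin1" "{1, a, b} \<noteq> {1}"
    using assms(3) by (auto simp: Pfin1_def)
  have proper_factors: "X \<in> {{1, a}, {1, b}}"
    if "X \<in> Pfin1" "X \<noteq> {1}" "X \<subset> {1, a, b}" for X
    using that unfolding Pfin1_def by auto
  have products: "set_mult {1, a} {1, a} = {1, a}" "set_mult {1, b} {1, b} = {1, b}"
    "a * b \<in> set_mult {1, a} {1, b}" "a * b \<in> set_mult {1, b} {1, a}"
    using assms(1,2) by (auto simp: mult.commute)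
  fix X Y
  assume XY: "X \<in> Pfin1" "Y \<in> Pfin1" "X \<noteq> {1}" "Y \<noteq> {1}" "X \<subset> {1, a, b}" "Y \<subset> {1, a, b}"
  have "X \<in> {{1, a}, {1, b}}" "Y \<in> {{1, a}, {1, b}}"
    using proper_factors[OF XY(1,3,5)] proper_factors[OF XY(2,4,6)] .
  then have "set_mult X Y \<in> {{1, a}, {1, b}} \<or> a * b \<in> set_mult X Y"
    using products by blast
  moreover have "b \<notin> {1, a}" "a \<notin> {1, b}"
    using assms by auto
  ultimately show "{1, a, b} \<noteq> set_mult X Y"
    using assms(3) by blast
qed

lemma ex_minimal_factorization_Pfin1_submset:
  fixes Z :: "'a::monoid_mult set"
  assumes "factorization Pfin1 set_mult {1} Z F"
  shows "\<exists>G. minimal_factorization Pfin1 set_mult {1} Z G \<and> mset G \<subseteq># mset F"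
  using assms
proof (induction "length F" arbitrary: F rule: less_induct)
  case less
  show ?case
  proof (cases "minimal_factorization Pfin1 set_mult {1} Z F")
    case False
    then obtain G where G: "factorization Pfin1 set_mult {1} Z G" "mset G \<subset># mset F"
      using less.prems
      unfolding minimal_factorization_def word_le_Pfin1_iff subset_mset.less_le_not_le by blast
    then have "length G < length F"
      by (metis mset_subset_size size_mset)
    then show ?thesis
      using less.hyps G by (meson subset_mset.less_imp_le subset_mset.order_trans)
  qed blast
qed

lemma minimal_factorization_Pfin1_pair:
  fixes Z P Q :: "'a::monoid_mult set"
  assumes "factorization Pfin1 set_mult {1} Z [P, Q]" "Z \<notin> {{1}, P, Q}"
  shows "minimal_factorization Pfin1 set_mult {1} Z [P, Q]"
  unfolding minimal_factorization_def
proof (intro conjI notI)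
  assume "\<exists>G. factorization Pfin1 set_mult {1} Z G \<and>
    word_le Pfin1 set_mult G [P, Q] \<and> \<not> word_le Pfin1 set_mult [P, Q] G"
  then obtain G where G: "factorization Pfin1 set_mult {1} Z G" "mset G \<subset># mset [P, Q]"
    unfolding word_le_Pfin1_iff subset_mset.less_le_not_le by blast
  then have "length G < 2" "set G \<subseteq> {P, Q}"
    using mset_subset_size[OF G(2)] set_mset_mono[OF subset_mset.less_imp_le[OF G(2)]] by auto
  moreover have "word_prod set_mult {1} G = Z"
    using G(1) unfolding factorization_def by blast
  ultimately show False
    using assms(2) by (cases G) (auto simp: word_prod_def)
qed (fact assms(1))

lemma UmF_Pfin1_pair_letters_mem:
  fixes Z P Q :: "'a::monoid_mult set"
  assumes "UmF (Pfin1 :: 'a set set) set_mult {1}"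
    and "factorization Pfin1 set_mult {1} Z F"
    and "factorization Pfin1 set_mult {1} Z [P, Q]" "Z \<notin> {{1}, P, Q}"
  shows "P \<in> set F" "Q \<in> set F"
proof -
  obtain G where G: "minimal_factorization Pfin1 set_mult {1} Z G" "mset G \<subseteq># mset F"
    using ex_minimal_factorization_Pfin1_submset[OF assms(2)] by blast
  have "word_equiv Pfin1 set_mult G [P, Q]"
    using assms(1) G(1) minimal_factorization_Pfin1_pair[OF assms(3,4)] unfolding UmF_def by blast
  then have "mset [P, Q] \<subseteq># mset F"
    using G(2) unfolding word_equiv_def word_le_Pfin1_iff by (meson subset_mset.order_trans)
  then show "P \<in> set F" "Q \<in> set F"
    by (auto dest: set_mset_mono)
qed

lemma UmF_Pfin1_square_mem:
  fixes a :: "'a::monoid_mult"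
  assumes "UmF (Pfin1 :: 'a set set) set_mult {1}"
  shows "a * a \<in> {1, a}"
proof (rule ccontr)
  assume square: "a * a \<notin> {1, a}"
  then have "a \<notin> {1, a * a}"
    by auto
  define Z where "Z = {1, a, a * a, a * (a * a)}"
  have "factorization Pfin1 set_mult {1} Z [{1, a}, {1, a}, {1, a}]"
    using mirreducible_Pfin1_pair \<open>a \<notin> {1, a * a}\<close>
    by (auto simp: factorization_def word_prod_def Z_def)
  moreover have "factorization Pfin1 set_mult {1} Z [{1, a}, {1, a * a}]"
    using mirreducible_Pfin1_pair square \<open>a \<notin> {1, a * a}\<close>
    by (auto simp: factorization_def word_prod_def Z_def)
  moreover have "Z \<notin> {{1}, {1, a}, {1, a * a}}"
    using square \<open>a \<notin> {1, a * a}\<close> unfolding Z_def by blast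
  ultimately have "{1, a * a} \<in> set [{1, a}, {1, a}, {1, a}]"
    by (rule UmF_Pfin1_pair_letters_mem(2)[OF assms])
  then show False
    using square by auto
qed

lemma UmF_Pfin1_involution_mult_mem:
  fixes a b :: "'a::monoid_mult"
  assumes "UmF (Pfin1 :: 'a set set) set_mult {1}" "a * a = 1"
  shows "a * b \<in> {1, a, b}"
proof (rule ccontr)
  assume ab: "a * b \<notin> {1, a, b}"
  then have "a \<notin> {1, a * b}" "b \<notin> {1, a}"
    using assms(2) by auto
  have "a * (a * b) = b"
    using assms(2) by (simp add: mult.assoc[symmetric])
  define Z where "Z = {1, a, b, a * b}"
  have "factorization Pfin1 set_mult {1} Z [{1, a}, {1, b}]"
    using mirreducible_Pfin1_pair \<open>a \<notin> {1, a * b}\<close> \<open>b \<notin> {1, a}\<close>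
    by (auto simp: factorization_def word_prod_def Z_def)
  moreover have "factorization Pfin1 set_mult {1} Z [{1, a}, {1, a * b}]"
    using mirreducible_Pfin1_pair ab \<open>a \<notin> {1, a * b}\<close> \<open>a * (a * b) = b\<close>
    by (auto simp: factorization_def word_prod_def Z_def)
  moreover have "Z \<notin> {{1}, {1, a}, {1, a * b}}"
    using \<open>a \<notin> {1, a * b}\<close> \<open>b \<notin> {1, a}\<close> unfolding Z_def by blast
  ultimately have "{1, a * b} \<in> set [{1, a}, {1, b}]"
    by (rule UmF_Pfin1_pair_letters_mem(2)[OF assms(1)])
  then show False
    using ab by auto
qed

lemma UmF_Pfin1_idempotents_mult_mem:
  fixes a b :: "'a::comm_monoid_mult"
  assumes "UmF (Pfin1 :: 'a set set) set_mult {1}" "a * a = a" "b * b = b"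
  shows "a * b \<in> {1, a, b}"
proof (rule ccontr)
  assume ab: "a * b \<notin> {1, a, b}"
  then have "a \<notin> {1, b}" "b \<notin> {1, a}" "a \<notin> {1, a * b}"
    using assms(2) by auto
  have "a * (a * b) = a * b" "b * (a * b) = a * b"
    using assms(2,3) by (metis mult.assoc mult.commute)+
  define Z where "Z = {1, a, b, a * b}"
  have "factorization Pfin1 set_mult {1} Z [{1, a}, {1, b}]"
    using mirreducible_Pfin1_pair \<open>a \<notin> {1, b}\<close> \<open>b \<notin> {1, a}\<close>
    by (auto simp: factorization_def word_prod_def Z_def)
  moreover have "factorization Pfin1 set_mult {1} Z [{1, a, b}, {1, a * b}]"
    using mirreducible_Pfin1_pair mirreducible_Pfin1_idempotent_triple[OF assms(2,3) ab] ab
      \<open>a * (a * b) = a * b\<close> \<open>b * (a * b) = a * b\<close>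
    by (auto simp: factorization_def word_prod_def Z_def)
  moreover have "Z \<notin> {{1}, {1, a, b}, {1, a * b}}"
    using ab \<open>a \<notin> {1, a * b}\<close> unfolding Z_def by blast
  ultimately have "{1, a, b} \<in> set [{1, a}, {1, b}]"
    by (rule UmF_Pfin1_pair_letters_mem(1)[OF assms(1)])
  then show False
    using \<open>a \<notin> {1, b}\<close> \<open>b \<notin> {1, a}\<close> by auto
qed

lemma UmF_Pfin1_mult_mem:
  fixes a b :: "'a::comm_monoid_mult"
  assumes "UmF (Pfin1 :: 'a set set) set_mult {1}"
  shows "a * b \<in> {1, a, b}"
proof -
  have "a * a \<in> {1, a}" "b * b \<in> {1, b}"
    using UmF_Pfin1_square_mem[OF assms] by blast+
  then consider "a * a = 1" | "b * b = 1" | "a * a = a" "b * b = b"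
    by blast
  then show ?thesis
  proof cases
    case 1
    then show ?thesis
      by (rule UmF_Pfin1_involution_mult_mem[OF assms])
  next
    case 2
    then show ?thesis
      using UmF_Pfin1_involution_mult_mem[OF assms, of b a] by (auto simp: mult.commute)
  next
    case 3
    then show ?thesis
      by (rule UmF_Pfin1_idempotents_mult_mem[OF assms])
  qed
qed

lemma set_mult_eq_Un_if_mult_mem:
  fixes X Y :: "'a::monoid_mult set"
  assumes "\<And>x y::'a. x * y \<in> {1, x, y}" "1 \<in> X" "1 \<in> Y"
  shows "set_mult X Y = X \<union> Y"
proof
  show "set_mult X Y \<subseteq> X \<union> Y"
  proof
    fix z assume "z \<in> set_mult X Y"
    then obtain x y where "z = x * y" "x \<in> X" "y \<in> Y"
      unfolding set_mult_def by blast
    then show "z \<in> X \<union> Y"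
      using assms(1)[of x y] assms(2) by auto
  qed
  show "X \<union> Y \<subseteq> set_mult X Y"
    using assms(2,3) unfolding set_mult_def by (force intro: mult_1_left[symmetric] mult_1_right[symmetric])
qed

lemma word_prod_eq_insert_Union_if_mult_mem:
  fixes As :: "'a::monoid_mult set list"
  assumes "\<And>x y::'a. x * y \<in> {1, x, y}" "\<forall>A\<in>set As. 1 \<in> A"
  shows "word_prod set_mult {1} As = insert 1 (\<Union>(set As))"
  using assms(2)
proof (induction As)
  case (Cons A As)
  then have "word_prod set_mult {1} (A # As) = A \<union> insert 1 (\<Union>(set As))"
    using set_mult_eq_Un_if_mult_mem[OF assms(1)] by (simp add: word_prod_def)
  also have "\<dots> = insert 1 (\<Union>(set (A # As)))"
    using Cons.prems by auto
  finally show ?case .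
qed (simp add: word_prod_def)

lemma mirreducible_Pfin1_imp_pair_if_mult_mem:
  fixes A :: "'a::monoid_mult set"
  assumes prod: "\<And>x y::'a. x * y \<in> {1, x, y}" and "mirreducible Pfin1 set_mult {1} A"
  shows "\<exists>a. a \<noteq> 1 \<and> A = {1, a}"
proof (rule ccontr)
  assume not_pair: "\<nexists>a. a \<noteq> 1 \<and> A = {1, a}"
  have "A \<in> Pfin1" "A \<noteq> {1}"
    using assms(2) unfolding mirreducible_def non_unit_divisor_Pfin1_iff by blast+
  then obtain a c where ac: "a \<in> A" "c \<in> A" "a \<noteq> 1" "c \<noteq> 1" "a \<noteq> c" "1 \<in> A"
    using not_pair unfolding Pfin1_def by blast
  have "{1, a} \<in> Pfin1" "A - {a} \<in> Pfin1"
    using \<open>A \<in> Pfin1\<close> ac unfolding Pfin1_def by auto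
  moreover have "set_mult {1, a} A = A" "set_mult (A - {a}) A = A" "A = set_mult {1, a} (A - {a})"
    using set_mult_eq_Un_if_mult_mem[OF prod, of "{1, a}"] set_mult_eq_Un_if_mult_mem[OF prod, of "A - {a}"] ac
    by (auto simp del: set_mult_insert_left)
  ultimately show False
    using mirreducible_Pfin1_neq_set_mult[OF assms(2)] ac not_pair by blast
qed

lemma factorization_Pfin1_iff_if_mult_mem:
  fixes Z :: "'a::monoid_mult set"
  assumes "\<And>x y::'a. x * y \<in> {1, x, y}"
  shows "factorization Pfin1 set_mult {1} Z As \<longleftrightarrow>
    (\<forall>A\<in>set As. mirreducible Pfin1 set_mult {1} A) \<and> Z = insert 1 (\<Union>(set As))"
  using word_prod_eq_insert_Union_if_mult_mem[OF assms, of As]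
    mirreducible_Pfin1_imp_pair_if_mult_mem[OF assms]
  unfolding factorization_def by (metis insertI1)

lemma minimal_factorization_Pfin1_if_mult_mem:
  fixes Z :: "'a::monoid_mult set"
  assumes prod: "\<And>x y::'a. x * y \<in> {1, x, y}"
    and min: "minimal_factorization Pfin1 set_mult {1} Z As"
  shows "distinct As" "set As = (\<lambda>a. {1, a}) ` (Z - {1})"
proof -
  have irr: "\<forall>A\<in>set As. mirreducible Pfin1 set_mult {1} A" and Z: "Z = insert 1 (\<Union>(set As))"
    using min factorization_Pfin1_iff_if_mult_mem[OF prod]
    unfolding minimal_factorization_def by blast+
  then have pairs: "\<forall>A\<in>set As. \<exists>a. a \<noteq> 1 \<and> A = {1, a}"
    using mirreducible_Pfin1_imp_pair_if_mult_mem[OF prod] by blast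
  show "set As = (\<lambda>a. {1, a}) ` (Z - {1})"
  proof
    show "set As \<subseteq> (\<lambda>a. {1, a}) ` (Z - {1})"
      using pairs Z by fastforce
    show "(\<lambda>a. {1, a}) ` (Z - {1}) \<subseteq> set As"
      using pairs Z by fastforce
  qed
  show "distinct As"
  proof (rule ccontr)
    assume "\<not> distinct As"
    then have "mset (remdups As) \<noteq> mset As"
      by (metis distinct_remdups length_remdups_eq size_mset)
    then have "mset (remdups As) \<subset># mset As"
      by (simp add: subset_mset.less_le mset_remdups_subset_eq)
    moreover have "factorization Pfin1 set_mult {1} Z (remdups As)"
      using factorization_Pfin1_iff_if_mult_mem[OF prod] irr Z by simp
    ultimately show False
      using min unfolding minimal_factorization_def word_le_Pfin1_iff subset_mset.less_le_not_le
      by blast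
  qed
qed

lemma UmF_Pfin1_if_mult_mem:
  assumes prod: "\<And>x y::'a::monoid_mult. x * y \<in> {1, x, y}"
  shows "UmF (Pfin1 :: 'a set set) set_mult {1}"
  unfolding UmF_def
proof (intro conjI allI impI)
  fix Z :: "'a set"
  assume "non_unit_divisor Pfin1 set_mult {1} Z"
  then have "Z \<in> Pfin1"
    by (simp add: non_unit_divisor_Pfin1_iff)
  then have "finite Z" "1 \<in> Z"
    unfolding Pfin1_def by blast+
  then obtain zs where "set zs = Z - {1}"
    using finite_list by blast
  then have "\<forall>A\<in>set (map (\<lambda>z. {1, z}) zs). mirreducible Pfin1 set_mult {1} A"
    "Z = insert 1 (\<Union>(set (map (\<lambda>z. {1, z}) zs)))"
    using mirreducible_Pfin1_pair \<open>1 \<in> Z\<close> by auto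
  then have "factorization Pfin1 set_mult {1} Z (map (\<lambda>z. {1, z}) zs)"
    using factorization_Pfin1_iff_if_mult_mem[OF prod] by blast
  then show "\<exists>As. factorization Pfin1 set_mult {1} Z As" ..
next
  fix Z :: "'a set" and As Bs
  assume "minimal_factorization Pfin1 set_mult {1} Z As \<and> minimal_factorization Pfin1 set_mult {1} Z Bs"
  then have "distinct As" "distinct Bs" "set As = set Bs"
    using minimal_factorization_Pfin1_if_mult_mem[OF prod, of Z As]
      minimal_factorization_Pfin1_if_mult_mem[OF prod, of Z Bs] by simp_all
  then have "mset As = mset Bs"
    by (simp add: set_eq_iff_mset_eq_distinct)
  then show "word_equiv Pfin1 set_mult As Bs"
    unfolding word_equiv_def word_le_Pfin1_iff by simp
qed

lemma units_of_monoid_iff_dvd_one: "u \<in> units_of_monoid \<longleftrightarrow> u dvd 1"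
  unfolding units_of_monoid_def by (auto elim!: dvdE intro: dvdI[OF sym])

lemma mult_not_in_units_of_monoid: "x \<notin> units_of_monoid \<Longrightarrow> x * y \<notin> units_of_monoid"
  unfolding units_of_monoid_iff_dvd_one by (blast dest: dvd_mult_left)

lemma mult_in_units_of_monoid:
  "x \<in> units_of_monoid \<Longrightarrow> y \<in> units_of_monoid \<Longrightarrow> x * y \<in> units_of_monoid"
  unfolding units_of_monoid_iff_dvd_one using mult_dvd_mono[of x 1 y 1] by simp

lemma units_of_monoid_cancel:
  assumes "u \<in> units_of_monoid" "u * y = u"
  shows "y = 1"
proof -
  obtain w where "u * w = 1"
    using assms(1) unfolding units_of_monoid_def by blast
  then have "y = (u * w) * y"
    by simp
  also have "\<dots> = w * (u * y)"
    by (simp add: ac_simps)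
  also have "\<dots> = 1"
    using assms(2) \<open>u * w = 1\<close> by (simp add: mult.commute)
  finally show ?thesis .
qed

lemma units_of_monoid_subset_pair_if_mult_mem:
  assumes prod: "\<And>x y::'a::comm_monoid_mult. x * y \<in> {1, x, y}"
  obtains u where "(units_of_monoid :: 'a set) \<subseteq> {1, u}"
proof -
  have product_eq_one: "u * v = 1" if "u \<in> units_of_monoid" "v \<in> units_of_monoid" "u \<noteq> 1" "v \<noteq> 1" for u v :: 'a
  proof -
    have "u * v \<noteq> u" "u * v \<noteq> v"
      using units_of_monoid_cancel[of u v] units_of_monoid_cancel[of v u] that
      by (metis mult.commute)+
    then show ?thesis
      using prod[of u v] by blast
  qed
  have unique: "v = u" if "u \<in> units_of_monoid" "v \<in> units_of_monoid" "u \<noteq> 1" "v \<noteq> 1"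
    for u v :: 'a
  proof -
    have "u * u = 1" "u * v = 1"
      using product_eq_one that by blast+
    have "v = (u * u) * v"
      using \<open>u * u = 1\<close> by simp
    also have "\<dots> = u"
      using \<open>u * v = 1\<close> by (simp add: mult.assoc)
    finally show ?thesis .
  qed
  show ?thesis
  proof (cases "\<exists>u\<in>units_of_monoid. u \<noteq> (1 :: 'a)")
    case True
    then obtain u :: 'a where "u \<in> units_of_monoid" "u \<noteq> 1"
      by blast
    then show ?thesis
      using that[of u] unique by blast
  qed (use that in blast)
qed

lemma subset_pair_if_card_le_two:
  assumes "finite A" "card A \<le> 2" "x \<in> A"
  obtains y where "A \<subseteq> {x, y}"
proof -
  have "card (A - {x}) \<le> Suc 0"
    using assms by (simp add: card_Diff_singleton)
  then have "\<forall>y\<in>A - {x}. \<forall>z\<in>A - {x}. y = z"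
    using assms(1) by (simp add: card_le_Suc0_iff_eq)
  then show ?thesis
    using that by blast
qed

lemma breakable_non_units_if_mult_mem:
  assumes "\<And>x y::'a::comm_monoid_mult. x * y \<in> {1, x, y}"
  shows "breakable (- (units_of_monoid :: 'a set))"
  unfolding breakable_def
proof (intro ballI)
  fix x y :: 'a
  assume "x \<in> - units_of_monoid" "y \<in> - units_of_monoid"
  then have "x * y \<noteq> 1"
    using mult_not_in_units_of_monoid[of x y] by (auto simp: units_of_monoid_def)
  then show "x * y \<in> {x, y}"
    using assms[of x y] by blast
qed

lemma unit_mult_non_unit_if_mult_mem:
  fixes u y :: "'a::comm_monoid_mult"
  assumes "\<And>x y::'a. x * y \<in> {1, x, y}" "u \<in> units_of_monoid" "y \<notin> units_of_monoid"
  shows "u * y = y"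
proof -
  have "u * y \<noteq> 1" "u * y \<noteq> u"
    using mult_not_in_units_of_monoid[of y u] units_of_monoid_cancel[of u y] assms(2,3)
    by (auto simp: units_of_monoid_def mult.commute)
  then show ?thesis
    using assms(1)[of u y] by blast
qed

lemma mult_mem_if_trivial_ideal_extension:
  fixes x y :: "'a::comm_monoid_mult"
  assumes "breakable (- (units_of_monoid :: 'a set))"
    and "finite (units_of_monoid :: 'a set)" "card (units_of_monoid :: 'a set) \<le> 2"
    and "\<And>u y::'a. u \<in> units_of_monoid \<Longrightarrow> y \<notin> units_of_monoid \<Longrightarrow> u * y = y"
  shows "x * y \<in> {1, x, y}"
proof -
  have "1 \<in> (units_of_monoid :: 'a set)"
    by (simp add: units_of_monoid_def)
  then obtain u :: 'a where units: "units_of_monoid \<subseteq> {1, u}"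
    using subset_pair_if_card_le_two[OF assms(2,3)] by blast
  show ?thesis
  proof (cases "x \<in> units_of_monoid"; cases "y \<in> units_of_monoid")
    assume "x \<in> units_of_monoid" "y \<in> units_of_monoid"
    moreover from this have "x * y \<in> units_of_monoid"
      by (rule mult_in_units_of_monoid)
    ultimately show ?thesis
      using units by (cases "x = 1"; cases "y = 1") auto
  qed (use assms(1) assms(4)[of x y] assms(4)[of y x] in \<open>auto simp: breakable_def mult.commute\<close>)
qed

lemma mult_mem_iff_trivial_ideal_extension:
  "(\<forall>x y::'a::comm_monoid_mult. x * y \<in> {1, x, y}) \<longleftrightarrow>
    ((\<forall>x\<in>- (units_of_monoid :: 'a set). \<forall>y\<in>- units_of_monoid. x * y \<in> - units_of_monoid) \<and>
     breakable (- (units_of_monoid :: 'a set)) \<and>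
     finite (units_of_monoid :: 'a set) \<and> card (units_of_monoid :: 'a set) \<le> 2 \<and>
     (\<forall>u\<in>(units_of_monoid :: 'a set). \<forall>y\<in>- units_of_monoid. u * y = y \<and> y * u = y))"
  (is "?prod \<longleftrightarrow> ?conditions")
proof
  assume ?prod
  then have prod: "\<And>x y::'a. x * y \<in> {1, x, y}"
    by blast
  then obtain u :: 'a where units: "units_of_monoid \<subseteq> {1, u}"
    using units_of_monoid_subset_pair_if_mult_mem by blast
  then have "finite (units_of_monoid :: 'a set)" "card (units_of_monoid :: 'a set) \<le> 2"
    using finite_subset card_mono[OF _ units] by (auto simp: card_insert_if split: if_split_asm)
  then show ?conditions
    using mult_not_in_units_of_monoid breakable_non_units_if_mult_mem[OF prod]
      unit_mult_non_unit_if_mult_mem[OF prod] by (auto simp: mult.commute)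
qed (use mult_mem_if_trivial_ideal_extension in blast)

theorem theorem4p8:
  fixes H :: "'a::comm_monoid_mult itself"
  shows "UmF (Pfin1 :: 'a set set) set_mult {1} \<longleftrightarrow>
    ((\<forall>x\<in>- (units_of_monoid :: 'a set). \<forall>y\<in>- units_of_monoid. x * y \<in> - units_of_monoid) \<and>
     breakable (- (units_of_monoid :: 'a set)) \<and>
     finite (units_of_monoid :: 'a set) \<and> card (units_of_monoid :: 'a set) \<le> 2 \<and>
     (\<forall>u\<in>(units_of_monoid :: 'a set). \<forall>y\<in>- units_of_monoid. u * y = y \<and> y * u = y))"
proof -
  have "UmF (Pfin1 :: 'a set set) set_mult {1} \<longleftrightarrow> (\<forall>x y::'a. x * y \<in> {1, x, y})"
    by (metis UmF_Pfin1_mult_mem UmF_Pfin1_if_mult_mem)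
  then show ?thesis
    by (simp only: mult_mem_iff_trivial_ideal_extension)
qed

end
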